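(* Let $\alpha>0$, $\beta\in\mathbb{R}$ with $0\le|\beta|<\alpha$, $\mu\in\mathbb{R}$, $\delta>0$, and set $\gamma=\sqrt{\alpha^2-\beta^2}$. Let $F(x;\alpha,\beta,\mu,\delta)$ denote the cumulative distribution function of the normal inverse Gaussian distribution with these parameters. Then for every $x\in\mathbb{R}$ with $x-\mu<0$, \[ F(x;\alpha,\beta,\mu,\delta)=\frac{\sqrt{2}\,\delta e^{\delta\gamma}}{\pi}\int_{\beta/\sqrt{2}}^{\infty} e^{\sqrt{2}(x-\mu)t}\,K_0\!\left(\sqrt{2\left((x-\mu)^2+\delta^2\right)}\,\sqrt{\tfrac{\gamma^2}{2}+t^2}\right)dt . \]
   Context: The normal inverse Gaussian (NIG) distribution with parameters $\alpha>0$, $0\le|\beta|<\alpha$, $\mu\in\mathbb{R}$, $\delta>0$ has density $f(x;\alpha,\beta,\mu,\delta)=\frac{\alpha\delta}{\pi}\frac{K_1\left(\alpha\sqrt{\delta^2+(x-\mu)^2}\right)}{\sqrt{\delta^2+(x-\mu)^2}}e^{\delta\gamma+\beta(x-\mu)}$, $x\in\mathbb{R}$, where $\gamma=\sqrt{\alpha^2-\beta^2}$, and its cumulative distribution function is $F(x;\alpha,\beta,\mu,\delta)=\int_{-\infty}^x f(t;\alpha,\beta,\mu,\delta)\,dt$. Here $K_\nu$ denotes the modified Bessel function of the second kind of order $\nu$. *)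

theory Defs
  imports "HOL-Analysis.Analysis"
begin

definition besselK :: "real \<Rightarrow> real \<Rightarrow> real" where
  "besselK \<nu> z = (LBINT t:{0..}. exp (- z * cosh t) * cosh (\<nu> * t))"

definition nig_gamma :: "real \<Rightarrow> real \<Rightarrow> real" where
  "nig_gamma \<alpha> \<beta> = sqrt (\<alpha>\<^sup>2 - \<beta>\<^sup>2)"

definition nig_density :: "real \<Rightarrow> real \<Rightarrow> real \<Rightarrow> real \<Rightarrow> real \<Rightarrow> real" where
  "nig_density \<alpha> \<beta> \<mu> \<delta> x =
     \<alpha> * \<delta> / pi * besselK 1 (\<alpha> * sqrt (\<delta>\<^sup>2 + (x - \<mu>)\<^sup>2)) / sqrt (\<delta>\<^sup>2 + (x - \<mu>)\<^sup>2)
     * exp (\<delta> * nig_gamma \<alpha> \<beta> + \<beta> * (x - \<mu>))"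

definition nig_cdf :: "real \<Rightarrow> real \<Rightarrow> real \<Rightarrow> real \<Rightarrow> real \<Rightarrow> real" where
  "nig_cdf \<alpha> \<beta> \<mu> \<delta> x = (LBINT t:{..x}. nig_density \<alpha> \<beta> \<mu> \<delta> t)"

end

theory Submission
  imports Defs
begin

text \<open>
  Both sides are expressed through the same double integral. The substitutions \<open>q = e\<^sup>u\<close> and
  \<open>q = sqrt (a/b) p\<close> turn the defining integral of \<open>K\<^sub>\<nu>\<close> into
  \<open>K\<^sub>\<nu>(2 sqrt (a b)) = 1/2 (a/b)\<^bsup>\<nu>/2\<^esup> \<integral>\<^sub>0\<^sup>\<infinity> p\<^bsup>\<nu>-1\<^esup> exp (-(a p + b/p)) dp\<close>.
  For \<open>\<nu> = 1\<close> this exhibits the NIG density as a normal variance-mean mixture,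
  \<open>f(t) = \<delta> e\<^bsup>\<delta>\<gamma>\<^esup>/\<pi> \<integral>\<^sub>0\<^sup>\<infinity> exp (-(\<delta>\<^sup>2 p + \<gamma>\<^sup>2/(4p)) - p (t - \<mu> - \<beta>/(2p))\<^sup>2) dp\<close>,
  so by Tonelli \<open>F(x)\<close> is \<open>\<delta> e\<^bsup>\<delta>\<gamma>\<^esup>/\<pi>\<close> times
  \<open>\<integral>\<^sub>0\<^sup>\<infinity> exp (-(\<delta>\<^sup>2 p + \<gamma>\<^sup>2/(4p))) \<integral>\<^sub>-\<^sub>\<infinity>\<^bsup>x-\<mu>-\<beta>/(2p)\<^esup> exp (-p w\<^sup>2) dw dp\<close>.
  For \<open>\<nu> = 0\<close> the right-hand side yields the same double integral after exchanging the order
  of integration and substituting \<open>t = sqrt 2 p (x - \<mu> - w)\<close>. All integrals are taken as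
  nonnegative integrals, so Tonelli's theorem needs no integrability side conditions.
\<close>

section \<open>Nonnegative integrals on the real line\<close>

lemma set_integral_eq_nn_integral:
  fixes f :: "'a \<Rightarrow> real"
  assumes [measurable]: "f \<in> borel_measurable M" "A \<in> sets M" and nonneg: "\<And>x. x \<in> A \<Longrightarrow> 0 \<le> f x"
  shows "(LINT x:A|M. f x) = enn2real (\<integral>\<^sup>+x\<in>A. ennreal (f x) \<partial>M)"
proof -
  have "(LINT x:A|M. f x) = enn2real (\<integral>\<^sup>+x. ennreal (indicator A x * f x) \<partial>M)"
    unfolding set_lebesgue_integral_def real_scaleR_def
    by (rule integral_eq_nn_integral) (auto simp: nonneg split: split_indicator)
  also have "\<dots> = enn2real (\<integral>\<^sup>+x\<in>A. ennreal (f x) \<partial>M)"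
    by (intro arg_cong[where f=enn2real] nn_integral_cong) (simp split: split_indicator)
  finally show ?thesis .
qed

lemma pred_mem_atMost_measurable [measurable]:
  fixes f g :: "'a \<Rightarrow> real"
  assumes [measurable]: "f \<in> borel_measurable M" "g \<in> borel_measurable M"
  shows "Measurable.pred M (\<lambda>z. g z \<in> {..f z})"
  unfolding atMost_iff by measurable

lemma borel_measurable_indicator_lborel [measurable]:
  "A \<in> sets borel \<Longrightarrow> (indicator A :: 'a::euclidean_space \<Rightarrow> ennreal) \<in> borel_measurable lborel"
  by (simp add: borel_measurable_indicator)

lemma borel_measurable_cosh [measurable (raw)]:
  fixes f :: "'a \<Rightarrow> real"
  assumes "f \<in> borel_measurable M"
  shows "(\<lambda>x. cosh (f x)) \<in> borel_measurable M"
  using continuous_on_cosh[OF continuous_on_id]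
  by (intro measurable_compose[OF assms] borel_measurable_continuous_onI) auto

lemma set_nn_integral_cmult_ennreal:
  fixes f :: "'a \<Rightarrow> real"
  assumes [measurable]: "f \<in> borel_measurable M" "A \<in> sets M" and "0 \<le> c"
  shows "(\<integral>\<^sup>+x\<in>A. ennreal (c * f x) \<partial>M) = ennreal c * (\<integral>\<^sup>+x\<in>A. ennreal (f x) \<partial>M)"
proof -
  have "(\<integral>\<^sup>+x\<in>A. ennreal (c * f x) \<partial>M) = (\<integral>\<^sup>+x. ennreal c * (ennreal (f x) * indicator A x) \<partial>M)"
    using assms(3) by (simp add: ennreal_mult' mult.assoc)
  also have "\<dots> = ennreal c * (\<integral>\<^sup>+x\<in>A. ennreal (f x) \<partial>M)"
    by (rule nn_integral_cmult) measurable
  finally show ?thesis .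
qed

lemma set_nn_integral_lborel_swap:
  fixes f :: "real \<Rightarrow> real \<Rightarrow> ennreal"
  assumes [measurable]: "(\<lambda>(t, p). f t p) \<in> borel_measurable (borel \<Otimes>\<^sub>M borel)"
    "A \<in> sets borel" "B \<in> sets borel"
  shows "(\<integral>\<^sup>+t\<in>A. (\<integral>\<^sup>+p\<in>B. f t p \<partial>lborel) \<partial>lborel) = (\<integral>\<^sup>+p\<in>B. (\<integral>\<^sup>+t\<in>A. f t p \<partial>lborel) \<partial>lborel)"
proof -
  have "(\<integral>\<^sup>+t\<in>A. (\<integral>\<^sup>+p\<in>B. f t p \<partial>lborel) \<partial>lborel)
      = (\<integral>\<^sup>+t. (\<integral>\<^sup>+p. f t p * indicator B p * indicator A t \<partial>lborel) \<partial>lborel)"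
    by (intro nn_integral_cong nn_integral_multc[symmetric]) measurable
  also have "\<dots> = (\<integral>\<^sup>+p. (\<integral>\<^sup>+t. f t p * indicator B p * indicator A t \<partial>lborel) \<partial>lborel)"
    by (rule lborel_pair.Fubini') measurable
  also have "\<dots> = (\<integral>\<^sup>+p\<in>B. (\<integral>\<^sup>+t\<in>A. f t p \<partial>lborel) \<partial>lborel)"
  proof (intro nn_integral_cong)
    fix p :: real
    have "(\<integral>\<^sup>+t. f t p * indicator B p * indicator A t \<partial>lborel)
        = (\<integral>\<^sup>+t. f t p * indicator A t * indicator B p \<partial>lborel)"
      by (simp only: mult.assoc mult.commute[of "indicator B p"])
    also have "\<dots> = (\<integral>\<^sup>+t\<in>A. f t p \<partial>lborel) * indicator B p"
      by (rule nn_integral_multc) measurable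
    finally show "(\<integral>\<^sup>+t. f t p * indicator B p * indicator A t \<partial>lborel)
        = (\<integral>\<^sup>+t\<in>A. f t p \<partial>lborel) * indicator B p" .
  qed
  finally show ?thesis .
qed

lemma LIMSEQ_set_nn_integral_incseq:
  fixes f :: "'a \<Rightarrow> ennreal"
  assumes A: "incseq A" "\<And>n. A n \<in> sets M" and [measurable]: "f \<in> borel_measurable M"
  shows "(\<lambda>n. \<integral>\<^sup>+x\<in>A n. f x \<partial>M) \<longlonglongrightarrow> (\<integral>\<^sup>+x\<in>(\<Union>n. A n). f x \<partial>M)"
proof (rule nn_integral_LIMSEQ)
  show "incseq (\<lambda>n x. f x * indicator (A n) x)"
    using A(1) by (auto simp: incseq_def le_fun_def intro!: mult_left_mono split: split_indicator)
  show "(\<lambda>n. f x * indicator (A n) x) \<longlonglongrightarrow> f x * indicator (\<Union>n. A n) x" for x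
  proof (cases "x \<in> (\<Union>n. A n)")
    case True
    then obtain N where "x \<in> A N" by blast
    then have "\<forall>\<^sub>F n in sequentially. f x * indicator (A n) x = f x * indicator (\<Union>n. A n) x"
      using A(1) True \<open>x \<in> A N\<close> unfolding eventually_sequentially incseq_def
      by (intro exI[of _ N]) (auto split: split_indicator)
    then show ?thesis
      by (rule tendsto_eventually)
  qed auto
qed (use A in auto)

lemma nn_integral_exp_substitution:
  fixes f :: "real \<Rightarrow> real"
  assumes [measurable]: "f \<in> borel_measurable borel"
  shows "(\<integral>\<^sup>+u. ennreal (f (exp u) * exp u) \<partial>lborel) = (\<integral>\<^sup>+q\<in>{0<..}. ennreal (f q) \<partial>lborel)"
proof (rule LIMSEQ_unique)
  have "(\<Union>n. {- real n..real n}) = UNIV"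
  proof (intro equalityI subsetI)
    fix u :: real
    obtain n :: nat where "\<bar>u\<bar> \<le> real n" using real_arch_simple by blast
    then show "u \<in> (\<Union>n. {- real n..real n})" by (intro UN_I[of n]) auto
  qed auto
  then show "(\<lambda>n. \<integral>\<^sup>+u\<in>{- real n..real n}. ennreal (f (exp u) * exp u) \<partial>lborel)
      \<longlonglongrightarrow> (\<integral>\<^sup>+u. ennreal (f (exp u) * exp u) \<partial>lborel)"
    using LIMSEQ_set_nn_integral_incseq[of "\<lambda>n. {- real n..real n}" lborel]
    by (simp add: incseq_def)
  have "(\<Union>n. {exp (- real n)..exp (real n)}) = {0<..}"
  proof (intro equalityI subsetI)
    fix q :: real assume "q \<in> {0<..}"
    moreover obtain n :: nat where "\<bar>ln q\<bar> \<le> real n" using real_arch_simple by blast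
    ultimately have "exp (- real n) \<le> q \<and> q \<le> exp (real n)"
      by (metis abs_le_iff exp_le_cancel_iff exp_ln greaterThan_iff minus_le_iff)
    then show "q \<in> (\<Union>n. {exp (- real n)..exp (real n)})" by auto
  qed (auto intro: less_le_trans[OF exp_gt_zero])
  then have "(\<lambda>n. \<integral>\<^sup>+q\<in>{exp (- real n)..exp (real n)}. ennreal (f q) \<partial>lborel)
      \<longlonglongrightarrow> (\<integral>\<^sup>+q\<in>{0<..}. ennreal (f q) \<partial>lborel)"
    using LIMSEQ_set_nn_integral_incseq[of "\<lambda>n. {exp (- real n)..exp (real n)}" lborel]
    by (simp add: incseq_def)
  moreover have "(\<integral>\<^sup>+q\<in>{exp (- real n)..exp (real n)}. ennreal (f q) \<partial>lborel)
      = (\<integral>\<^sup>+u\<in>{- real n..real n}. ennreal (f (exp u) * exp u) \<partial>lborel)" for n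
  proof -
    have "(\<integral>\<^sup>+q. ennreal (f q * indicator {exp (- real n)..exp (real n)} q) \<partial>lborel)
        = (\<integral>\<^sup>+u. ennreal (f (exp u) * exp u * indicator {- real n..real n} u) \<partial>lborel)"
      by (rule nn_integral_substitution)
        (simp_all add: set_borel_measurable_def DERIV_exp continuous_on_exp continuous_on_id)
    then show ?thesis
      by (simp add: ennreal_mult'' ennreal_indicator)
  qed
  ultimately show "(\<lambda>n. \<integral>\<^sup>+u\<in>{- real n..real n}. ennreal (f (exp u) * exp u) \<partial>lborel)
      \<longlonglongrightarrow> (\<integral>\<^sup>+q\<in>{0<..}. ennreal (f q) \<partial>lborel)"
    by simp
qed

lemma nn_integral_reflect:
  fixes h :: "real \<Rightarrow> ennreal"
  assumes "h \<in> borel_measurable borel"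
  shows "(\<integral>\<^sup>+u. h (- u) \<partial>lborel) = (\<integral>\<^sup>+u. h u \<partial>lborel)"
  using assms by (subst (2) lborel_distr_uminus[symmetric]) (simp add: nn_integral_distr)

lemma nn_integral_even:
  fixes h :: "real \<Rightarrow> ennreal"
  assumes [measurable]: "h \<in> borel_measurable borel" and even: "\<And>u. h (- u) = h u"
  shows "(\<integral>\<^sup>+u. h u \<partial>lborel) = 2 * (\<integral>\<^sup>+u\<in>{0..}. h u \<partial>lborel)"
proof -
  have "(\<integral>\<^sup>+u. h u \<partial>lborel) = (\<integral>\<^sup>+u\<in>{..<0} \<union> {0..}. h u \<partial>lborel)"
    by (intro nn_integral_cong) (auto split: split_indicator)
  also have "\<dots> = (\<integral>\<^sup>+u\<in>{..<0}. h u \<partial>lborel) + (\<integral>\<^sup>+u\<in>{0..}. h u \<partial>lborel)"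
    by (rule nn_integral_disjoint_pair) auto
  also have "(\<integral>\<^sup>+u\<in>{..<0}. h u \<partial>lborel) = (\<integral>\<^sup>+u\<in>{0<..}. h u \<partial>lborel)"
    using nn_integral_reflect[of "\<lambda>u. h u * indicator {..<0} u"]
    by (simp add: even indicator_def)
  also have "\<dots> = (\<integral>\<^sup>+u\<in>{0..}. h u \<partial>lborel)"
    using AE_lborel_singleton[of 0]
    by (intro nn_integral_cong_AE) (auto elim!: eventually_mono split: split_indicator)
  finally show ?thesis by (simp add: mult_2)
qed

lemma nn_integral_atMost_translate:
  fixes h :: "real \<Rightarrow> ennreal"
  assumes "h \<in> borel_measurable borel"
  shows "(\<integral>\<^sup>+t\<in>{..x}. h (t - m) \<partial>lborel) = (\<integral>\<^sup>+w\<in>{..x - m}. h w \<partial>lborel)"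
  using assms
  by (subst nn_integral_real_affine[where c=1 and t=m]) (auto intro!: nn_integral_cong split: split_indicator)

lemma nn_integral_atMost_shifted_gaussian:
  assumes "0 \<le> c"
  shows "(\<integral>\<^sup>+t\<in>{..x}. ennreal (c * exp (- p * (t - m)\<^sup>2)) \<partial>lborel)
    = ennreal c * (\<integral>\<^sup>+w\<in>{..x - m}. ennreal (exp (- p * w\<^sup>2)) \<partial>lborel)"
proof -
  have "(\<integral>\<^sup>+t\<in>{..x}. ennreal (c * exp (- p * (t - m)\<^sup>2)) \<partial>lborel)
      = ennreal c * (\<integral>\<^sup>+t\<in>{..x}. ennreal (exp (- p * (t - m)\<^sup>2)) \<partial>lborel)"
    using assms by (rule set_nn_integral_cmult_ennreal[rotated 2]) measurable
  also have "\<dots> = ennreal c * (\<integral>\<^sup>+w\<in>{..x - m}. ennreal (exp (- p * w\<^sup>2)) \<partial>lborel)"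
    by (subst nn_integral_atMost_translate[where h="\<lambda>w. ennreal (exp (- p * w\<^sup>2))"]) simp_all
  finally show ?thesis .
qed

lemma nn_integral_atLeast_reflect_scale:
  fixes h :: "real \<Rightarrow> ennreal"
  assumes "h \<in> borel_measurable borel" "c > 0"
  shows "(\<integral>\<^sup>+t\<in>{l..}. h t \<partial>lborel) = ennreal c * (\<integral>\<^sup>+w\<in>{..y - l / c}. h (c * (y - w)) \<partial>lborel)"
proof -
  have ind: "indicator {l..} (c * y + - c * w) = (indicator {..y - l / c} w :: ennreal)" for w
    using assms(2) by (simp add: indicator_def field_simps)
  have "(\<integral>\<^sup>+t\<in>{l..}. h t \<partial>lborel)
      = ennreal c * (\<integral>\<^sup>+w. h (c * y + - c * w) * indicator {l..} (c * y + - c * w) \<partial>lborel)"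
    using assms by (subst nn_integral_real_affine[where c="- c" and t="c * y"]) auto
  then show ?thesis
    by (simp only: ind) (simp add: algebra_simps)
qed

lemma nn_integral_exp_neg_atLeast_0:
  fixes a :: real
  assumes "a > 0"
  shows "(\<integral>\<^sup>+p\<in>{0..}. ennreal (exp (- a * p)) \<partial>lborel) = ennreal (1 / a)"
proof -
  have "((\<lambda>p. exp (- a * p)) \<longlongrightarrow> 0) at_top"
    using filterlim_compose[OF exp_at_bot filterlim_uminus_at_bot_at_top[THEN filterlim_compose,
          OF filterlim_tendsto_pos_mult_at_top[OF tendsto_const assms filterlim_ident]]]
    by simp
  from tendsto_divide[OF tendsto_minus[OF this] tendsto_const[of a]]
  have "((\<lambda>p. - exp (- a * p) / a) \<longlongrightarrow> 0) at_top"
    using assms by simp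
  then show ?thesis
    using assms
    by (subst nn_integral_FTC_atLeast[where F="\<lambda>p. - exp (- a * p) / a"])
      (auto intro!: derivative_eq_intros)
qed

lemma sqrt_mult_rescaled_sum:
  fixes a b p :: real
  assumes "a > 0" "b > 0" "p > 0"
  shows "sqrt (a * b) * (sqrt (a / b) * p + 1 / (sqrt (a / b) * p)) = a * p + b / p"
proof -
  have "sqrt (a * b) * sqrt (a / b) = a" and "sqrt (a * b) / sqrt (a / b) = b"
    using assms by (simp_all add: real_sqrt_mult real_sqrt_divide field_simps)
  then show ?thesis
    using assms by (simp add: field_simps)
qed


section \<open>An integral representation of \<open>K\<^sub>\<nu>\<close>\<close>

lemma besselK_eq_nn_integral:
  "besselK \<nu> z = enn2real (\<integral>\<^sup>+u\<in>{0..}. ennreal (exp (- z * cosh u) * cosh (\<nu> * u)) \<partial>lborel)"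
  unfolding besselK_def by (rule set_integral_eq_nn_integral) auto

lemma besselK_nonneg: "0 \<le> besselK \<nu> z"
  by (simp add: besselK_eq_nn_integral)

lemma borel_measurable_besselK [measurable (raw)]:
  fixes f :: "'a \<Rightarrow> real"
  assumes "f \<in> borel_measurable M"
  shows "(\<lambda>x. besselK \<nu> (f x)) \<in> borel_measurable M"
proof (rule measurable_compose[OF assms])
  show "besselK \<nu> \<in> borel_measurable borel"
    unfolding besselK_eq_nn_integral by measurable
qed

lemma besselK_kernel_exp_substitution:
  "2 * (\<integral>\<^sup>+u\<in>{0..}. ennreal (exp (- z * cosh u) * cosh (\<nu> * u)) \<partial>lborel)
     = (\<integral>\<^sup>+q\<in>{0<..}. ennreal (exp (- z * ((q + 1 / q) / 2)) * q powr (\<nu> - 1)) \<partial>lborel)"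
proof -
  let ?k = "\<lambda>u. exp (- z * cosh u)"
  let ?I = "\<integral>\<^sup>+u. ennreal (?k u * exp (\<nu> * u)) \<partial>lborel"
  have cosh_split: "2 * ennreal (?k u * cosh (\<nu> * u))
      = ennreal (?k u * exp (\<nu> * u)) + ennreal (?k (- u) * exp (\<nu> * - u))" for u
  proof -
    have "2 * ennreal (?k u * cosh (\<nu> * u)) = ennreal (2 * (?k u * cosh (\<nu> * u)))"
      by (simp add: ennreal_mult')
    also have "2 * (?k u * cosh (\<nu> * u)) = ?k u * exp (\<nu> * u) + ?k (- u) * exp (\<nu> * - u)"
      by (simp add: cosh_field_def algebra_simps)
    finally show ?thesis
      by (simp add: ennreal_plus)
  qed
  have "2 * (2 * (\<integral>\<^sup>+u\<in>{0..}. ennreal (?k u * cosh (\<nu> * u)) \<partial>lborel))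
      = 2 * (\<integral>\<^sup>+u. ennreal (?k u * cosh (\<nu> * u)) \<partial>lborel)"
    by (subst nn_integral_even) auto
  also have "\<dots> = (\<integral>\<^sup>+u. 2 * ennreal (?k u * cosh (\<nu> * u)) \<partial>lborel)"
    by (rule nn_integral_cmult[symmetric]) measurable
  also have "\<dots> = (\<integral>\<^sup>+u. ennreal (?k u * exp (\<nu> * u)) + ennreal (?k (- u) * exp (\<nu> * - u)) \<partial>lborel)"
    by (simp only: cosh_split)
  also have "\<dots> = ?I + (\<integral>\<^sup>+u. ennreal (?k (- u) * exp (\<nu> * - u)) \<partial>lborel)"
    by (rule nn_integral_add) auto
  also have "(\<integral>\<^sup>+u. ennreal (?k (- u) * exp (\<nu> * - u)) \<partial>lborel) = ?I"
    by (rule nn_integral_reflect[where h="\<lambda>u. ennreal (?k u * exp (\<nu> * u))"]) auto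
  also have "?I = (\<integral>\<^sup>+q\<in>{0<..}. ennreal (exp (- z * ((q + 1 / q) / 2)) * q powr (\<nu> - 1)) \<partial>lborel)"
  proof -
    have "exp (- z * ((exp u + 1 / exp u) / 2)) * exp u powr (\<nu> - 1) * exp u = ?k u * exp (\<nu> * u)" for u
      by (simp add: cosh_field_def powr_def exp_minus field_simps flip: exp_add)
    then show ?thesis
      using nn_integral_exp_substitution[of "\<lambda>q. exp (- z * ((q + 1 / q) / 2)) * q powr (\<nu> - 1)"]
      by simp
  qed
  finally have "2 * (2 * (\<integral>\<^sup>+u\<in>{0..}. ennreal (?k u * cosh (\<nu> * u)) \<partial>lborel))
      = 2 * (\<integral>\<^sup>+q\<in>{0<..}. ennreal (exp (- z * ((q + 1 / q) / 2)) * q powr (\<nu> - 1)) \<partial>lborel)"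
    by (simp only: mult_2)
  then show ?thesis
    by (simp only: ennreal_mult_cancel_left) simp
qed

lemma nn_integral_besselK_kernel_rescale:
  fixes a b :: real
  assumes "a > 0" "b > 0"
  shows "(\<integral>\<^sup>+q\<in>{0<..}. ennreal (exp (- (2 * sqrt (a * b)) * ((q + 1 / q) / 2)) * q powr (\<nu> - 1)) \<partial>lborel)
    = ennreal (sqrt (a / b) powr \<nu>)
      * (\<integral>\<^sup>+p\<in>{0<..}. ennreal (exp (- (a * p + b / p)) * p powr (\<nu> - 1)) \<partial>lborel)"
proof -
  define c where "c = sqrt (a / b)"
  have c: "c > 0" using assms by (simp add: c_def)
  have scaled: "c * (exp (- (2 * sqrt (a * b)) * ((c * p + 1 / (c * p)) / 2)) * (c * p) powr (\<nu> - 1))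
      = c powr \<nu> * (exp (- (a * p + b / p)) * p powr (\<nu> - 1))" if "p > 0" for p
  proof -
    have "- (2 * sqrt (a * b)) * ((c * p + 1 / (c * p)) / 2) = - (a * p + b / p)"
      using sqrt_mult_rescaled_sum[OF assms that] by (simp add: c_def)
    moreover have "c * (c * p) powr (\<nu> - 1) = c powr \<nu> * p powr (\<nu> - 1)"
      using c that by (simp add: powr_mult powr_diff)
    ultimately show ?thesis by simp
  qed
  have "(\<integral>\<^sup>+q\<in>{0<..}. ennreal (exp (- (2 * sqrt (a * b)) * ((q + 1 / q) / 2)) * q powr (\<nu> - 1)) \<partial>lborel)
      = ennreal c * (\<integral>\<^sup>+p. ennreal (exp (- (2 * sqrt (a * b)) * ((c * p + 1 / (c * p)) / 2)) * (c * p) powr (\<nu> - 1))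
          * indicator {0<..} (c * p) \<partial>lborel)"
    using c by (subst nn_integral_real_affine[where c=c and t=0]) auto
  also have "\<dots> = (\<integral>\<^sup>+p. ennreal (c powr \<nu>) * (ennreal (exp (- (a * p + b / p)) * p powr (\<nu> - 1)) * indicator {0<..} p) \<partial>lborel)"
  proof (subst nn_integral_cmult[symmetric], measurable, intro nn_integral_cong)
    fix p :: real
    show "ennreal c * (ennreal (exp (- (2 * sqrt (a * b)) * ((c * p + 1 / (c * p)) / 2)) * (c * p) powr (\<nu> - 1))
          * indicator {0<..} (c * p))
        = ennreal (c powr \<nu>) * (ennreal (exp (- (a * p + b / p)) * p powr (\<nu> - 1)) * indicator {0<..} p)"
    proof (cases "p > 0")
      case True
      then show ?thesis
        using c scaled[OF True] by (simp add: ennreal_mult'[symmetric] del: ennreal_mult'')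
    qed (use c in \<open>simp add: zero_less_mult_iff\<close>)
  qed
  also have "\<dots> = ennreal (c powr \<nu>) * (\<integral>\<^sup>+p\<in>{0<..}. ennreal (exp (- (a * p + b / p)) * p powr (\<nu> - 1)) \<partial>lborel)"
    by (rule nn_integral_cmult) measurable
  finally show ?thesis by (simp add: c_def)
qed

lemma besselK_kernel_nn_integral:
  fixes a b :: real
  assumes "a > 0" "b > 0"
  shows "2 * (\<integral>\<^sup>+u\<in>{0..}. ennreal (exp (- (2 * sqrt (a * b)) * cosh u) * cosh (\<nu> * u)) \<partial>lborel)
    = ennreal (sqrt (a / b) powr \<nu>)
      * (\<integral>\<^sup>+p\<in>{0<..}. ennreal (exp (- (a * p + b / p)) * p powr (\<nu> - 1)) \<partial>lborel)"
  by (simp only: besselK_kernel_exp_substitution nn_integral_besselK_kernel_rescale[OF assms])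

lemma besselK_kernel_nn_integral_finite:
  assumes "\<bar>\<nu>\<bar> \<le> 1" "z > 0"
  shows "(\<integral>\<^sup>+u\<in>{0..}. ennreal (exp (- z * cosh u) * cosh (\<nu> * u)) \<partial>lborel) < \<infinity>"
proof -
  define a where "a = z / 2"
  have a: "a > 0"
    using assms(2) by (simp add: a_def)
  have z: "z = 2 * sqrt (a * a)"
    using a by (simp only: real_sqrt_abs2) (simp add: a_def)
  let ?X1 = "\<integral>\<^sup>+u\<in>{0..}. ennreal (exp (- z * cosh u) * cosh (1 * u)) \<partial>lborel"
  have "2 * ?X1 = (\<integral>\<^sup>+p\<in>{0<..}. ennreal (exp (- (a * p + a / p)) * p powr (1 - 1)) \<partial>lborel)"
    using besselK_kernel_nn_integral[OF a a, of 1] a unfolding z by simp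
  also have "\<dots> \<le> (\<integral>\<^sup>+p\<in>{0..}. ennreal (exp (- a * p)) \<partial>lborel)"
    using a by (intro nn_integral_mono) (auto intro!: ennreal_leI split: split_indicator)
  also have "\<dots> < \<infinity>"
    using nn_integral_exp_neg_atLeast_0[OF a] by simp
  finally have "?X1 < \<infinity>"
    by (auto simp: ennreal_mult_less_top)
  moreover have "cosh (\<nu> * u) \<le> cosh (1 * u)" for u
  proof -
    have "\<bar>\<nu> * u\<bar> \<le> \<bar>u\<bar>"
      using assms(1) by (simp add: abs_mult mult_left_le_one_le)
    then show ?thesis
      using cosh_real_nonneg_le_iff[of "\<bar>\<nu> * u\<bar>" "\<bar>u\<bar>"] by simp
  qed
  then have "(\<integral>\<^sup>+u\<in>{0..}. ennreal (exp (- z * cosh u) * cosh (\<nu> * u)) \<partial>lborel) \<le> ?X1"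
    by (intro nn_integral_mono mult_right_mono ennreal_leI mult_left_mono) auto
  ultimately show ?thesis
    by (rule le_less_trans[rotated])
qed

lemma ennreal_besselK:
  fixes a b :: real
  assumes "\<bar>\<nu>\<bar> \<le> 1" "a > 0" "b > 0"
  shows "ennreal (besselK \<nu> (2 * sqrt (a * b)))
    = ennreal (sqrt (a / b) powr \<nu> / 2)
      * (\<integral>\<^sup>+p\<in>{0<..}. ennreal (exp (- (a * p + b / p)) * p powr (\<nu> - 1)) \<partial>lborel)"
proof -
  let ?X = "\<integral>\<^sup>+u\<in>{0..}. ennreal (exp (- (2 * sqrt (a * b)) * cosh u) * cosh (\<nu> * u)) \<partial>lborel"
  have "ennreal (besselK \<nu> (2 * sqrt (a * b))) = ?X"
    using besselK_kernel_nn_integral_finite[OF assms(1), of "2 * sqrt (a * b)"] assms(2,3)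
    by (simp add: besselK_eq_nn_integral ennreal_enn2real)
  also have "\<dots> = 2 * ?X / 2"
    using ennreal_mult_divide_eq[of 2 ?X] by (simp add: mult.commute)
  also have "\<dots> = ennreal (sqrt (a / b) powr \<nu>)
      * (\<integral>\<^sup>+p\<in>{0<..}. ennreal (exp (- (a * p + b / p)) * p powr (\<nu> - 1)) \<partial>lborel) / 2"
    by (simp only: besselK_kernel_nn_integral[OF assms(2,3)])
  also have "\<dots> = ennreal (sqrt (a / b) powr \<nu> / 2)
      * (\<integral>\<^sup>+p\<in>{0<..}. ennreal (exp (- (a * p + b / p)) * p powr (\<nu> - 1)) \<partial>lborel)"
  proof -
    have "ennreal c * P / 2 = ennreal (c / 2) * P" if "0 \<le> c" for c and P :: ennreal
      using that by (simp add: ennreal_times_divide divide_ennreal[symmetric] mult.commute)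
    then show ?thesis by simp
  qed
  finally show ?thesis .
qed

lemma ennreal_scaled_besselK:
  fixes a b c :: real
  assumes "\<bar>\<nu>\<bar> \<le> 1" "a > 0" "b > 0" "c \<ge> 0"
  shows "ennreal (c * besselK \<nu> (2 * sqrt (a * b)))
    = (\<integral>\<^sup>+p\<in>{0<..}. ennreal (c * (sqrt (a / b) powr \<nu> / 2) * (exp (- (a * p + b / p)) * p powr (\<nu> - 1))) \<partial>lborel)"
proof -
  have "ennreal (c * besselK \<nu> (2 * sqrt (a * b)))
      = ennreal c * (ennreal (sqrt (a / b) powr \<nu> / 2)
        * (\<integral>\<^sup>+p\<in>{0<..}. ennreal (exp (- (a * p + b / p)) * p powr (\<nu> - 1)) \<partial>lborel))"
    using assms(4) by (simp only: ennreal_mult' ennreal_besselK[OF assms(1-3)])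
  also have "\<dots> = ennreal (c * (sqrt (a / b) powr \<nu> / 2))
      * (\<integral>\<^sup>+p\<in>{0<..}. ennreal (exp (- (a * p + b / p)) * p powr (\<nu> - 1)) \<partial>lborel)"
    using assms(4) by (simp add: ennreal_mult'[symmetric] mult.assoc[symmetric])
  also have "\<dots> = (\<integral>\<^sup>+p\<in>{0<..}. ennreal (c * (sqrt (a / b) powr \<nu> / 2) * (exp (- (a * p + b / p)) * p powr (\<nu> - 1))) \<partial>lborel)"
  proof (rule sym, rule set_nn_integral_cmult_ennreal)
    show "0 \<le> c * (sqrt (a / b) powr \<nu> / 2)"
      using assms(4) by simp
  qed measurable
  finally show ?thesis .
qed


section \<open>The NIG distribution function\<close>

lemma nig_gamma_pos_square:
  assumes "\<bar>\<beta>\<bar> < \<alpha>"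
  shows "nig_gamma \<alpha> \<beta> > 0" and "\<alpha>\<^sup>2 = (nig_gamma \<alpha> \<beta>)\<^sup>2 + \<beta>\<^sup>2"
proof -
  have "\<beta>\<^sup>2 < \<alpha>\<^sup>2"
    using power_strict_mono[OF assms abs_ge_zero, of 2] by simp
  then show "nig_gamma \<alpha> \<beta> > 0" and "\<alpha>\<^sup>2 = (nig_gamma \<alpha> \<beta>)\<^sup>2 + \<beta>\<^sup>2"
    by (simp_all add: nig_gamma_def)
qed

lemma nig_density_nonneg:
  assumes "\<alpha> > 0" "\<delta> > 0"
  shows "0 \<le> nig_density \<alpha> \<beta> \<mu> \<delta> t"
  using assms by (simp add: nig_density_def besselK_nonneg)

lemma borel_measurable_nig_density [measurable]:
  "nig_density \<alpha> \<beta> \<mu> \<delta> \<in> borel_measurable borel"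
  unfolding nig_density_def by measurable

lemma ennreal_nig_density:
  assumes "\<alpha> > 0" "\<bar>\<beta>\<bar> < \<alpha>" "\<delta> > 0"
  shows "ennreal (nig_density \<alpha> \<beta> \<mu> \<delta> t)
    = (\<integral>\<^sup>+p\<in>{0<..}. ennreal (\<delta> * exp (\<delta> * nig_gamma \<alpha> \<beta>) / pi
        * exp (- (\<delta>\<^sup>2 * p + (nig_gamma \<alpha> \<beta>)\<^sup>2 / (4 * p))) * exp (- p * (t - (\<mu> + \<beta> / (2 * p)))\<^sup>2)) \<partial>lborel)"
proof -
  define g where "g = nig_gamma \<alpha> \<beta>"
  define a where "a = \<delta>\<^sup>2 + (t - \<mu>)\<^sup>2"
  define b where "b = \<alpha>\<^sup>2 / 4"
  define C where "C = \<alpha> * \<delta> / pi * exp (\<delta> * g + \<beta> * (t - \<mu>)) / sqrt a"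
  have a: "a > 0" and b: "b > 0" and C: "C \<ge> 0"
    using assms by (simp_all add: a_def b_def C_def add_pos_nonneg)
  have sqrt_ab: "\<alpha> * sqrt a = 2 * sqrt (a * b)" and sqrt_a_b: "sqrt (a / b) = 2 * sqrt a / \<alpha>"
    using assms(1) a by (simp_all add: b_def real_sqrt_mult real_sqrt_divide)
  have integrand: "C * (sqrt (a / b) powr 1 / 2) * (exp (- (a * p + b / p)) * p powr (1 - 1))
      = \<delta> * exp (\<delta> * g) / pi * exp (- (\<delta>\<^sup>2 * p + g\<^sup>2 / (4 * p))) * exp (- p * (t - (\<mu> + \<beta> / (2 * p)))\<^sup>2)"
    if "p > 0" for p
  proof -
    have exponent: "\<beta> * (t - \<mu>) - (a * p + b / p)
        = - (\<delta>\<^sup>2 * p + g\<^sup>2 / (4 * p)) + - p * (t - (\<mu> + \<beta> / (2 * p)))\<^sup>2"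
      unfolding a_def b_def g_def nig_gamma_pos_square(2)[OF assms(2)]
      using that by (simp add: field_simps power2_eq_square)
    have factor: "C * (sqrt (a / b) / 2) = \<delta> / pi * exp (\<delta> * g + \<beta> * (t - \<mu>))"
      using assms(1) a by (simp add: C_def sqrt_a_b)
    have "C * (sqrt (a / b) powr 1 / 2) * (exp (- (a * p + b / p)) * p powr (1 - 1))
        = C * (sqrt (a / b) / 2) * exp (- (a * p + b / p))"
      using that a b by simp
    also have "\<dots> = \<delta> * exp (\<delta> * g) / pi * exp (\<beta> * (t - \<mu>) - (a * p + b / p))"
      unfolding factor by (simp add: exp_add exp_diff exp_minus field_simps)
    finally show ?thesis
      unfolding exponent exp_add by (simp only: mult.assoc)
  qed
  have "nig_density \<alpha> \<beta> \<mu> \<delta> t = C * besselK 1 (2 * sqrt (a * b))"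
    by (simp add: nig_density_def C_def g_def a_def[symmetric] flip: sqrt_ab)
  then have "ennreal (nig_density \<alpha> \<beta> \<mu> \<delta> t) = ennreal (C * besselK 1 (2 * sqrt (a * b)))"
    by (rule arg_cong)
  also have "\<dots> = (\<integral>\<^sup>+p\<in>{0<..}. ennreal (C * (sqrt (a / b) powr 1 / 2) * (exp (- (a * p + b / p)) * p powr (1 - 1))) \<partial>lborel)"
    using a b C by (intro ennreal_scaled_besselK) auto
  also have "\<dots> = (\<integral>\<^sup>+p\<in>{0<..}. ennreal (\<delta> * exp (\<delta> * g) / pi
      * exp (- (\<delta>\<^sup>2 * p + g\<^sup>2 / (4 * p))) * exp (- p * (t - (\<mu> + \<beta> / (2 * p)))\<^sup>2)) \<partial>lborel)"
    using integrand by (intro set_nn_integral_cong) auto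
  finally show ?thesis
    by (simp only: g_def)
qed

definition nig_mixture_integral :: "real \<Rightarrow> real \<Rightarrow> real \<Rightarrow> real \<Rightarrow> ennreal" where
  "nig_mixture_integral \<delta> g \<beta> y =
     (\<integral>\<^sup>+p\<in>{0<..}. ennreal (exp (- (\<delta>\<^sup>2 * p + g\<^sup>2 / (4 * p))))
        * (\<integral>\<^sup>+w\<in>{..y - \<beta> / (2 * p)}. ennreal (exp (- p * w\<^sup>2)) \<partial>lborel) \<partial>lborel)"

lemma nn_integral_nig_density_atMost:
  assumes "\<alpha> > 0" "\<bar>\<beta>\<bar> < \<alpha>" "\<delta> > 0"
  shows "(\<integral>\<^sup>+t\<in>{..x}. ennreal (nig_density \<alpha> \<beta> \<mu> \<delta> t) \<partial>lborel)
    = ennreal (\<delta> * exp (\<delta> * nig_gamma \<alpha> \<beta>) / pi) * nig_mixture_integral \<delta> (nig_gamma \<alpha> \<beta>) \<beta> (x - \<mu>)"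
proof -
  define K where "K = \<delta> * exp (\<delta> * nig_gamma \<alpha> \<beta>) / pi"
  define E where "E p = exp (- (\<delta>\<^sup>2 * p + (nig_gamma \<alpha> \<beta>)\<^sup>2 / (4 * p)))" for p
  have K: "K \<ge> 0" and E: "E p \<ge> 0" for p
    using assms by (simp_all add: K_def E_def)
  have "(\<integral>\<^sup>+t\<in>{..x}. ennreal (nig_density \<alpha> \<beta> \<mu> \<delta> t) \<partial>lborel)
      = (\<integral>\<^sup>+t\<in>{..x}. (\<integral>\<^sup>+p\<in>{0<..}. ennreal (K * E p * exp (- p * (t - (\<mu> + \<beta> / (2 * p)))\<^sup>2)) \<partial>lborel) \<partial>lborel)"
    by (simp only: ennreal_nig_density[OF assms] K_def E_def)
  also have "\<dots> = (\<integral>\<^sup>+p\<in>{0<..}. (\<integral>\<^sup>+t\<in>{..x}. ennreal (K * E p * exp (- p * (t - (\<mu> + \<beta> / (2 * p)))\<^sup>2)) \<partial>lborel) \<partial>lborel)"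
    by (rule set_nn_integral_lborel_swap) (unfold E_def, measurable)
  also have "\<dots> = (\<integral>\<^sup>+p\<in>{0<..}. ennreal K * (ennreal (E p)
      * (\<integral>\<^sup>+w\<in>{..x - \<mu> - \<beta> / (2 * p)}. ennreal (exp (- p * w\<^sup>2)) \<partial>lborel)) \<partial>lborel)"
  proof (intro nn_integral_cong)
    fix p :: real
    show "(\<integral>\<^sup>+t\<in>{..x}. ennreal (K * E p * exp (- p * (t - (\<mu> + \<beta> / (2 * p)))\<^sup>2)) \<partial>lborel) * indicator {0<..} p
      = ennreal K * (ennreal (E p) * (\<integral>\<^sup>+w\<in>{..x - \<mu> - \<beta> / (2 * p)}. ennreal (exp (- p * w\<^sup>2)) \<partial>lborel))
        * indicator {0<..} p"
      using nn_integral_atMost_shifted_gaussian[where c="K * E p" and m="\<mu> + \<beta> / (2 * p)"] K E[of p]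
      by (simp add: ennreal_mult' mult.assoc diff_diff_eq)
  qed
  also have "\<dots> = ennreal K * nig_mixture_integral \<delta> (nig_gamma \<alpha> \<beta>) \<beta> (x - \<mu>)"
    unfolding nig_mixture_integral_def E_def mult.assoc by (rule nn_integral_cmult) measurable
  finally show ?thesis
    by (simp only: K_def)
qed

lemma ennreal_exp_mult_besselK0:
  assumes "\<delta> > 0" "g > 0"
  shows "ennreal (exp (sqrt 2 * y * t) * besselK 0 (sqrt (2 * (y\<^sup>2 + \<delta>\<^sup>2)) * sqrt (g\<^sup>2 / 2 + t\<^sup>2)))
    = (\<integral>\<^sup>+p\<in>{0<..}. ennreal (exp (sqrt 2 * y * t - ((y\<^sup>2 + \<delta>\<^sup>2) * p + (g\<^sup>2 / 4 + t\<^sup>2 / 2) / p)) / (2 * p)) \<partial>lborel)"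
proof -
  define R where "R = y\<^sup>2 + \<delta>\<^sup>2"
  define B where "B = g\<^sup>2 / 4 + t\<^sup>2 / 2"
  have R: "R > 0" and B: "B > 0"
    using assms by (simp_all add: R_def B_def add_nonneg_pos add_pos_nonneg)
  have "sqrt (2 * (y\<^sup>2 + \<delta>\<^sup>2)) * sqrt (g\<^sup>2 / 2 + t\<^sup>2) = sqrt (2\<^sup>2 * (R * B))"
    by (simp add: R_def B_def field_simps flip: real_sqrt_mult)
  then have "ennreal (exp (sqrt 2 * y * t) * besselK 0 (sqrt (2 * (y\<^sup>2 + \<delta>\<^sup>2)) * sqrt (g\<^sup>2 / 2 + t\<^sup>2)))
      = ennreal (exp (sqrt 2 * y * t) * besselK 0 (2 * sqrt (R * B)))"
    by (simp add: real_sqrt_mult)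
  also have "\<dots> = (\<integral>\<^sup>+p\<in>{0<..}. ennreal (exp (sqrt 2 * y * t) * (sqrt (R / B) powr 0 / 2)
      * (exp (- (R * p + B / p)) * p powr (0 - 1))) \<partial>lborel)"
    using R B by (intro ennreal_scaled_besselK) auto
  also have "\<dots> = (\<integral>\<^sup>+p\<in>{0<..}. ennreal (exp (sqrt 2 * y * t - (R * p + B / p)) / (2 * p)) \<partial>lborel)"
  proof (intro set_nn_integral_cong)
    fix p :: real
    assume "p \<in> space lborel \<inter> {0<..}"
    then have "sqrt (R / B) powr 0 = 1" and "p powr (0 - 1) = 1 / p"
      using R B by (simp_all add: powr_minus_divide)
    then show "ennreal (exp (sqrt 2 * y * t) * (sqrt (R / B) powr 0 / 2) * (exp (- (R * p + B / p)) * p powr (0 - 1)))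
        = ennreal (exp (sqrt 2 * y * t - (R * p + B / p)) / (2 * p))"
      by (simp add: exp_diff exp_minus exp_add field_simps)
  qed simp_all
  finally show ?thesis
    by (simp only: R_def B_def)
qed

lemma nn_integral_besselK0_kernel_atLeast:
  assumes "p > 0"
  shows "(\<integral>\<^sup>+t\<in>{\<beta> / sqrt 2..}. ennreal (exp (sqrt 2 * y * t - ((y\<^sup>2 + \<delta>\<^sup>2) * p + (g\<^sup>2 / 4 + t\<^sup>2 / 2) / p)) / (2 * p)) \<partial>lborel)
    = ennreal (sqrt 2 / 2) * (ennreal (exp (- (\<delta>\<^sup>2 * p + g\<^sup>2 / (4 * p))))
      * (\<integral>\<^sup>+w\<in>{..y - \<beta> / (2 * p)}. ennreal (exp (- p * w\<^sup>2)) \<partial>lborel))"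
proof -
  define F where "F t = exp (sqrt 2 * y * t - ((y\<^sup>2 + \<delta>\<^sup>2) * p + (g\<^sup>2 / 4 + t\<^sup>2 / 2) / p)) / (2 * p)" for t
  define E where "E = exp (- (\<delta>\<^sup>2 * p + g\<^sup>2 / (4 * p)))"
  have scaled: "sqrt 2 * p * F (sqrt 2 * p * (y - w)) = sqrt 2 / 2 * E * exp (- p * w\<^sup>2)" for w
    using assms by (simp add: F_def E_def exp_diff exp_minus field_simps power2_eq_square flip: exp_add)
  have "(\<integral>\<^sup>+t\<in>{\<beta> / sqrt 2..}. ennreal (F t) \<partial>lborel)
      = ennreal (sqrt 2 * p) * (\<integral>\<^sup>+w\<in>{..y - \<beta> / (2 * p)}. ennreal (F (sqrt 2 * p * (y - w))) \<partial>lborel)"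
  proof -
    have "y - \<beta> / sqrt 2 / (sqrt 2 * p) = y - \<beta> / (2 * p)"
      by simp
    then show ?thesis
      using assms by (subst nn_integral_atLeast_reflect_scale[where c="sqrt 2 * p" and y=y])
        (simp_all only:, simp_all add: F_def)
  qed
  also have "\<dots> = (\<integral>\<^sup>+w\<in>{..y - \<beta> / (2 * p)}. ennreal (sqrt 2 * p * F (sqrt 2 * p * (y - w))) \<partial>lborel)"
    using assms by (intro set_nn_integral_cmult_ennreal[symmetric]) (simp_all add: F_def)
  also have "\<dots> = ennreal (sqrt 2 / 2 * E) * (\<integral>\<^sup>+w\<in>{..y - \<beta> / (2 * p)}. ennreal (exp (- p * w\<^sup>2)) \<partial>lborel)"
    unfolding scaled by (rule set_nn_integral_cmult_ennreal) (simp_all add: E_def)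
  also have "\<dots> = ennreal (sqrt 2 / 2) * (ennreal E
      * (\<integral>\<^sup>+w\<in>{..y - \<beta> / (2 * p)}. ennreal (exp (- p * w\<^sup>2)) \<partial>lborel))"
    by (subst ennreal_mult) (simp_all add: E_def mult.assoc)
  finally show ?thesis
    by (simp only: F_def E_def)
qed

lemma nn_integral_exp_besselK0_atLeast:
  assumes "\<delta> > 0" "g > 0"
  shows "(\<integral>\<^sup>+t\<in>{\<beta> / sqrt 2..}. ennreal (exp (sqrt 2 * y * t)
      * besselK 0 (sqrt (2 * (y\<^sup>2 + \<delta>\<^sup>2)) * sqrt (g\<^sup>2 / 2 + t\<^sup>2))) \<partial>lborel)
    = ennreal (sqrt 2 / 2) * nig_mixture_integral \<delta> g \<beta> y"
proof -
  have "(\<integral>\<^sup>+t\<in>{\<beta> / sqrt 2..}. ennreal (exp (sqrt 2 * y * t)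
      * besselK 0 (sqrt (2 * (y\<^sup>2 + \<delta>\<^sup>2)) * sqrt (g\<^sup>2 / 2 + t\<^sup>2))) \<partial>lborel)
      = (\<integral>\<^sup>+t\<in>{\<beta> / sqrt 2..}. (\<integral>\<^sup>+p\<in>{0<..}. ennreal (exp (sqrt 2 * y * t
          - ((y\<^sup>2 + \<delta>\<^sup>2) * p + (g\<^sup>2 / 4 + t\<^sup>2 / 2) / p)) / (2 * p)) \<partial>lborel) \<partial>lborel)"
    by (simp only: ennreal_exp_mult_besselK0[OF assms])
  also have "\<dots> = (\<integral>\<^sup>+p\<in>{0<..}. (\<integral>\<^sup>+t\<in>{\<beta> / sqrt 2..}. ennreal (exp (sqrt 2 * y * t
          - ((y\<^sup>2 + \<delta>\<^sup>2) * p + (g\<^sup>2 / 4 + t\<^sup>2 / 2) / p)) / (2 * p)) \<partial>lborel) \<partial>lborel)"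
    by (rule set_nn_integral_lborel_swap) measurable
  also have "\<dots> = (\<integral>\<^sup>+p\<in>{0<..}. ennreal (sqrt 2 / 2) * (ennreal (exp (- (\<delta>\<^sup>2 * p + g\<^sup>2 / (4 * p))))
      * (\<integral>\<^sup>+w\<in>{..y - \<beta> / (2 * p)}. ennreal (exp (- p * w\<^sup>2)) \<partial>lborel)) \<partial>lborel)"
    using nn_integral_besselK0_kernel_atLeast by (intro set_nn_integral_cong) auto
  also have "\<dots> = ennreal (sqrt 2 / 2) * nig_mixture_integral \<delta> g \<beta> y"
    unfolding nig_mixture_integral_def mult.assoc by (rule nn_integral_cmult) measurable
  finally show ?thesis .
qed

theorem proposition1:
  fixes \<alpha> \<beta> \<mu> \<delta> x :: real
  assumes "\<alpha> > 0" and "\<bar>\<beta>\<bar> < \<alpha>" and "\<delta> > 0" and "x - \<mu> < 0"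
  shows "nig_cdf \<alpha> \<beta> \<mu> \<delta> x =
    sqrt 2 * \<delta> * exp (\<delta> * nig_gamma \<alpha> \<beta>) / pi *
    (LBINT t:{\<beta> / sqrt 2..}. exp (sqrt 2 * (x - \<mu>) * t) *
       besselK 0 (sqrt (2 * ((x - \<mu>)\<^sup>2 + \<delta>\<^sup>2)) * sqrt ((nig_gamma \<alpha> \<beta>)\<^sup>2 / 2 + t\<^sup>2)))"
proof -
  \<comment> \<open>The identity holds for every \<open>x\<close>.\<close>
  let ?M = "enn2real (nig_mixture_integral \<delta> (nig_gamma \<alpha> \<beta>) \<beta> (x - \<mu>))"
  have cdf: "nig_cdf \<alpha> \<beta> \<mu> \<delta> x = \<delta> * exp (\<delta> * nig_gamma \<alpha> \<beta>) / pi * ?M"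
    using assms(1,3) nn_integral_nig_density_atMost[OF assms(1-3)]
    by (simp add: nig_cdf_def set_integral_eq_nn_integral nig_density_nonneg enn2real_mult)
  have integral: "(LBINT t:{\<beta> / sqrt 2..}. exp (sqrt 2 * (x - \<mu>) * t) *
       besselK 0 (sqrt (2 * ((x - \<mu>)\<^sup>2 + \<delta>\<^sup>2)) * sqrt ((nig_gamma \<alpha> \<beta>)\<^sup>2 / 2 + t\<^sup>2))) = sqrt 2 / 2 * ?M"
    using nn_integral_exp_besselK0_atLeast[OF assms(3) nig_gamma_pos_square(1)[OF assms(2)]]
    by (simp add: set_integral_eq_nn_integral besselK_nonneg enn2real_mult)
  have "s * \<delta> * e / pi * (s / 2 * m) = s * s / 2 * (\<delta> * e / pi * m)" for s e m :: real
    by (simp add: field_simps)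
  then show ?thesis
    unfolding cdf integral by simp
qed

end
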